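(* Let $S$ be an epsilon-strongly $G$-graded ring such that $\epsilon_G:=\bigwedge\{\epsilon_g:g\in G\}$ exists and belongs to $B(\mathcal{E}_G)^*$. Then: (i) $\epsilon_GS=\bigoplus_{g\in G}\epsilon_GS_g$ is a strongly $G$-graded ring; (ii) if moreover $S$ is an epsilon-crossed product, then $\epsilon_GS$ is a crossed product.
   Context: $G$ is a group with identity $e$; $S=\bigoplus_{g\in G}S_g$ is an associative unital ring graded by $G$, $R=S_e$, $XY$ denotes finite sums of products. $S$ is epsilon-strongly graded: each ideal $S_gS_{g^{-1}}$ of $R$ has an identity $\epsilon_g$ with $\epsilon_gs=s=s\epsilon_{g^{-1}}$ for $s\in S_g$; $\epsilon_e=1_S$; each $\epsilon_g$ is an idempotent in $Z(R)$. $B(\mathcal{E}_G)$ is the multiplicative semigroup generated by $\{\epsilon_g:g\in G\}$, $B(\mathcal{E}_G)^*=B(\mathcal{E}_G)\setminus\{0\}$, with partial order $a\le b$ iff $a=ab$; $\bigwedge$ denotes the greatest lower bound in this order. A ring is strongly $G$-graded if $A_gA_h=A_{gh}$ for all $g,h$. $S$ is an epsilon-crossed product if for each $g$ there are $s\in S_g$, $t\in S_{g^{-1}}$ with $st=\epsilon_g$, $ts=\epsilon_{g^{-1}}$. A graded unital ring is a crossed product if each homogeneous component contains an invertible element. *)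

theory Defs
  imports Main
begin

text \<open>Conventions: the group G is a type of class group_add (group operation +,
identity 0, inverse uminus; not assumed commutative). The ring S is the whole
type 'a of class ring_1 (associative, unital).\<close>

definition set_prod_sums :: "'a::ring_1 set \<Rightarrow> 'a set \<Rightarrow> 'a set" where
  "set_prod_sums X Y = {(\<Sum>i<n. x i * y i) | (n::nat) x y. \<forall>i<n. x i \<in> X \<and> y i \<in> Y}"

definition graded_ring :: "'a::ring_1 set \<Rightarrow> ('g::group_add \<Rightarrow> 'a set) \<Rightarrow> bool" where
  "graded_ring R A \<longleftrightarrow>
     (\<forall>g. A g \<subseteq> R \<and> 0 \<in> A g \<and> (\<forall>x\<in>A g. \<forall>y\<in>A g. x + y \<in> A g) \<and> (\<forall>x\<in>A g. - x \<in> A g)) \<and>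
     (\<forall>g h. \<forall>x\<in>A g. \<forall>y\<in>A h. x * y \<in> A (g + h)) \<and>
     (\<forall>r\<in>R. \<exists>c. finite {g. c g \<noteq> 0} \<and> (\<forall>g. c g \<in> A g) \<and> r = (\<Sum>g\<in>{g. c g \<noteq> 0}. c g)) \<and>
     (\<forall>c. finite {g. c g \<noteq> 0} \<and> (\<forall>g. c g \<in> A g) \<and> (\<Sum>g\<in>{g. c g \<noteq> 0}. c g) = 0
           \<longrightarrow> (\<forall>g. c g = 0))"

definition strongly_graded :: "('g::group_add \<Rightarrow> 'a::ring_1 set) \<Rightarrow> bool" where
  "strongly_graded A \<longleftrightarrow> (\<forall>g h. set_prod_sums (A g) (A h) = A (g + h))"

definition crossed_product :: "'a::ring_1 set \<Rightarrow> 'a \<Rightarrow> ('g::group_add \<Rightarrow> 'a set) \<Rightarrow> bool" where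
  "crossed_product R one A \<longleftrightarrow>
     (\<forall>g. \<exists>u\<in>A g. \<exists>v\<in>R. u * v = one \<and> v * u = one)"

definition epsilon_strongly_graded :: "('g::group_add \<Rightarrow> 'a::ring_1 set) \<Rightarrow> ('g \<Rightarrow> 'a) \<Rightarrow> bool" where
  "epsilon_strongly_graded A eps \<longleftrightarrow>
     (\<forall>g. eps g \<in> set_prod_sums (A g) (A (- g)) \<and>
          (\<forall>x\<in>set_prod_sums (A g) (A (- g)). eps g * x = x \<and> x * eps g = x) \<and>
          (\<forall>s\<in>A g. eps g * s = s \<and> s * eps (- g) = s))"

definition epsilon_crossed_product :: "('g::group_add \<Rightarrow> 'a::ring_1 set) \<Rightarrow> ('g \<Rightarrow> 'a) \<Rightarrow> bool" where
  "epsilon_crossed_product A eps \<longleftrightarrow>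
     (\<forall>g. \<exists>s\<in>A g. \<exists>t\<in>A (- g). s * t = eps g \<and> t * s = eps (- g))"

inductive_set Beps :: "('g \<Rightarrow> 'a::ring_1) \<Rightarrow> 'a set" for eps where
  gen: "eps g \<in> Beps eps"
| mult: "a \<in> Beps eps \<Longrightarrow> b \<in> Beps eps \<Longrightarrow> a * b \<in> Beps eps"

definition bleq :: "'a::ring_1 \<Rightarrow> 'a \<Rightarrow> bool" where
  "bleq a b \<longleftrightarrow> a = a * b"

definition is_eps_meet :: "('g \<Rightarrow> 'a::ring_1) \<Rightarrow> 'a \<Rightarrow> bool" where
  "is_eps_meet eps e \<longleftrightarrow> e \<in> Beps eps \<and> (\<forall>g. bleq e (eps g)) \<and>
     (\<forall>b\<in>Beps eps. (\<forall>g. bleq b (eps g)) \<longrightarrow> bleq b e)"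

end

theory Submission
  imports Defs
begin

text \<open>Every \<open>\<epsilon>\<^sub>h\<close> is a sum of products \<open>a b\<close> with \<open>a \<in> S\<^sub>h\<close>, \<open>b \<in> S\<^sub>-\<^sub>h\<close>; for homogeneous \<open>s \<in> S\<^sub>g\<close>
the unit properties of \<open>\<epsilon>\<^sub>g\<^sub>+\<^sub>h\<close> on \<open>S\<^sub>g\<^sub>+\<^sub>h\<close> and of \<open>\<epsilon>\<^sub>h\<close> on \<open>S\<^sub>-\<^sub>h\<close> give the commutation rule
\<open>s \<epsilon>\<^sub>h = \<epsilon>\<^sub>g\<^sub>+\<^sub>h s\<close>. Hence homogeneous elements normalise the semigroup \<open>B(\<E>\<^sub>G)\<close>, which
is commutative. The meet \<open>\<epsilon>\<^sub>G\<close> absorbs every element of \<open>B(\<E>\<^sub>G)\<close>, so from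
\<open>s \<epsilon>\<^sub>G = b s\<close> and \<open>\<epsilon>\<^sub>G s = s c\<close> with \<open>b, c \<in> B(\<E>\<^sub>G)\<close> one gets that \<open>\<epsilon>\<^sub>G\<close> commutes with all
homogeneous elements. Thus \<open>\<epsilon>\<^sub>G\<close> is a homogeneous central idempotent of degree \<open>0\<close>, and
\<open>\<epsilon>\<^sub>G S\<close> is a graded ring with identity \<open>\<epsilon>\<^sub>G\<close>. Since \<open>\<epsilon>\<^sub>G \<epsilon>\<^sub>g = \<epsilon>\<^sub>G\<close>, multiplying
\<open>\<epsilon>\<^sub>g \<in> S\<^sub>g S\<^sub>-\<^sub>g\<close> by \<open>\<epsilon>\<^sub>G\<close> makes \<open>\<epsilon>\<^sub>G\<close> a unit of \<open>\<epsilon>\<^sub>G S\<^sub>g \<epsilon>\<^sub>G S\<^sub>-\<^sub>g\<close>, whence strong grading;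
likewise \<open>s t = \<epsilon>\<^sub>g\<close>, \<open>t s = \<epsilon>\<^sub>-\<^sub>g\<close> become \<open>(\<epsilon>\<^sub>G s)(\<epsilon>\<^sub>G t) = \<epsilon>\<^sub>G = (\<epsilon>\<^sub>G t)(\<epsilon>\<^sub>G s)\<close>.\<close>

lemma set_prod_sums_iff:
  "z \<in> set_prod_sums X Y \<longleftrightarrow>
     (\<exists>(n::nat) x y. z = (\<Sum>i<n. x i * y i) \<and> (\<forall>i<n. x i \<in> X \<and> y i \<in> Y))"
  unfolding set_prod_sums_def by blast

lemma sum_lessThan_closed:
  fixes f :: "nat \<Rightarrow> 'a::comm_monoid_add"
  assumes "0 \<in> Z" and "\<And>x y. x \<in> Z \<Longrightarrow> y \<in> Z \<Longrightarrow> x + y \<in> Z" and "\<And>i. i < n \<Longrightarrow> f i \<in> Z"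
  shows "(\<Sum>i<n. f i) \<in> Z"
  using assms(3) by (induction n) (simp_all add: assms(1,2))

lemma set_prod_sums_subset:
  assumes "0 \<in> Z" and "\<And>x y. x \<in> Z \<Longrightarrow> y \<in> Z \<Longrightarrow> x + y \<in> Z"
    and "\<And>x y. x \<in> X \<Longrightarrow> y \<in> Y \<Longrightarrow> x * y \<in> Z"
  shows "set_prod_sums X Y \<subseteq> Z"
  using assms by (auto simp: set_prod_sums_iff intro!: sum_lessThan_closed)

lemma graded_ring_component_subset: "graded_ring R S \<Longrightarrow> S g \<subseteq> R"
  unfolding graded_ring_def by blast

lemma graded_ring_component_zero: "graded_ring R S \<Longrightarrow> 0 \<in> S g"
  unfolding graded_ring_def by blast

lemma graded_ring_component_add: "graded_ring R S \<Longrightarrow> x \<in> S g \<Longrightarrow> y \<in> S g \<Longrightarrow> x + y \<in> S g"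
  unfolding graded_ring_def by blast

lemma graded_ring_component_uminus: "graded_ring R S \<Longrightarrow> x \<in> S g \<Longrightarrow> - x \<in> S g"
  unfolding graded_ring_def by blast

lemma graded_ring_mult: "graded_ring R S \<Longrightarrow> x \<in> S g \<Longrightarrow> y \<in> S h \<Longrightarrow> x * y \<in> S (g + h)"
  unfolding graded_ring_def by blast

lemma graded_ring_set_prod_sums_subset:
  "graded_ring R S \<Longrightarrow> set_prod_sums (S g) (S h) \<subseteq> S (g + h)"
  by (intro set_prod_sums_subset graded_ring_component_zero graded_ring_component_add graded_ring_mult)

context
  fixes S :: "'g::group_add \<Rightarrow> 'a::ring_1 set" and eps :: "'g \<Rightarrow> 'a"
  assumes esg: "epsilon_strongly_graded S eps"
begin

lemma eps_in_set_prod_sums: "eps g \<in> set_prod_sums (S g) (S (- g))"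
  using esg unfolding epsilon_strongly_graded_def by blast

lemma eps_mult_component: "s \<in> S g \<Longrightarrow> eps g * s = s"
  using esg unfolding epsilon_strongly_graded_def by blast

lemma component_mult_eps: "s \<in> S g \<Longrightarrow> s * eps (- g) = s"
  using esg unfolding epsilon_strongly_graded_def by blast

context
  fixes R :: "'a set"
  assumes graded: "graded_ring R S"
begin

lemma eps_in_component_zero: "eps g \<in> S 0"
  using eps_in_set_prod_sums graded_ring_set_prod_sums_subset[OF graded, of g "- g"] by auto

lemma component_mult_eps_commute:
  assumes s: "s \<in> S g"
  shows "s * eps h = eps (g + h) * s"
proof -
  obtain n :: nat and a b where eh: "eps h = (\<Sum>i<n. a i * b i)"
    and ab: "\<And>i. i < n \<Longrightarrow> a i \<in> S h \<and> b i \<in> S (- h)"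
    using eps_in_set_prod_sums[of h] unfolding set_prod_sums_iff by blast
  have "s * a i = eps (g + h) * (s * a i)" if "i < n" for i
    using eps_mult_component graded_ring_mult[OF graded s] ab that by metis
  then have "(\<Sum>i<n. s * a i * b i) = (\<Sum>i<n. eps (g + h) * (s * a i) * b i)"
    by (intro sum.cong) auto
  then have left: "s * eps h = eps (g + h) * s * eps h"
    unfolding eh by (simp add: sum_distrib_left mult.assoc)
  obtain m :: nat and c d where egh: "eps (g + h) = (\<Sum>i<m. c i * d i)"
    and cd: "\<And>i. i < m \<Longrightarrow> c i \<in> S (g + h) \<and> d i \<in> S (- (g + h))"
    using eps_in_set_prod_sums[of "g + h"] unfolding set_prod_sums_iff by blast
  have "d i * s = d i * s * eps h" if "i < m" for i
  proof -
    have "d i * s \<in> S (- (g + h) + g)" using graded_ring_mult[OF graded _ s] cd that by blast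
    then have "d i * s \<in> S (- h)" by (simp add: minus_add add.assoc)
    then show ?thesis using component_mult_eps by (metis minus_minus)
  qed
  then have "(\<Sum>i<m. c i * (d i * s)) = (\<Sum>i<m. c i * (d i * s * eps h))"
    by (intro sum.cong) auto
  then have right: "eps (g + h) * s = eps (g + h) * s * eps h"
    unfolding egh sum_distrib_right by (simp only: mult.assoc)
  show ?thesis using left right by simp
qed

lemma Beps_subset_component_zero: "b \<in> Beps eps \<Longrightarrow> b \<in> S 0"
  by (induction rule: Beps.induct)
    (use eps_in_component_zero graded_ring_mult[OF graded, of _ 0 _ 0] in auto)

lemma component_mult_Beps:
  assumes s: "s \<in> S g"
  shows "b \<in> Beps eps \<Longrightarrow> \<exists>b'\<in>Beps eps. s * b = b' * s"
proof (induction rule: Beps.induct)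
  case (gen h)
  show ?case
    using component_mult_eps_commute[OF s, of h] by (intro bexI[of _ "eps (g + h)"] Beps.gen)
next
  case (mult a b)
  then obtain a' b' where "a' \<in> Beps eps" "b' \<in> Beps eps" and a': "s * a = a' * s" and b': "s * b = b' * s"
    by blast
  have "s * (a * b) = a' * s * b" by (simp flip: a' mult.assoc)
  also have "\<dots> = (a' * b') * s" by (simp add: mult.assoc b')
  finally show ?case using \<open>a' \<in> Beps eps\<close> \<open>b' \<in> Beps eps\<close> by (intro bexI[of _ "a' * b'"] Beps.mult)
qed

lemma Beps_mult_component:
  assumes s: "s \<in> S g"
  shows "b \<in> Beps eps \<Longrightarrow> \<exists>b'\<in>Beps eps. b * s = s * b'"
proof (induction rule: Beps.induct)
  case (gen h)
  have "s * eps (- g + h) = eps h * s"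
    using component_mult_eps_commute[OF s, of "- g + h"] by (simp add: add.assoc[symmetric])
  then show ?case by (intro bexI[of _ "eps (- g + h)"] Beps.gen) simp
next
  case (mult a b)
  then obtain a' b' where "a' \<in> Beps eps" "b' \<in> Beps eps" and a': "a * s = s * a'" and b': "b * s = s * b'"
    by blast
  have "a * b * s = a * s * b'" by (simp add: mult.assoc b')
  also have "\<dots> = s * (a' * b')" by (simp add: a' mult.assoc)
  finally show ?case using \<open>a' \<in> Beps eps\<close> \<open>b' \<in> Beps eps\<close> by (intro bexI[of _ "a' * b'"] Beps.mult)
qed

lemma component_zero_commute_Beps:
  assumes x: "x \<in> S 0"
  shows "b \<in> Beps eps \<Longrightarrow> x * b = b * x"
proof (induction rule: Beps.induct)
  case (gen h)
  show ?case using component_mult_eps_commute[OF x, of h] by simp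
next
  case (mult a b)
  then show ?case by (metis mult.assoc)
qed

end

end

lemma eps_meet_below: "is_eps_meet eps e \<Longrightarrow> e * eps g = e"
  unfolding is_eps_meet_def bleq_def by metis

lemma eps_meet_absorbs:
  assumes "is_eps_meet eps e" shows "b \<in> Beps eps \<Longrightarrow> e * b = e"
proof (induction rule: Beps.induct)
  case (gen g)
  show ?case using eps_meet_below[OF assms] .
next
  case (mult a b)
  then show ?case by (simp add: mult.assoc[symmetric])
qed

definition graded_central_idempotent :: "('g::group_add \<Rightarrow> 'a::ring_1 set) \<Rightarrow> 'a \<Rightarrow> bool" where
  "graded_central_idempotent S e \<longleftrightarrow> e \<in> S 0 \<and> e * e = e \<and> (\<forall>g. \<forall>s\<in>S g. e * s = s * e)"

lemma eps_meet_graded_central_idempotent: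
  assumes graded: "graded_ring R S" and esg: "epsilon_strongly_graded S eps"
    and meet: "is_eps_meet eps e"
  shows "graded_central_idempotent S e"
proof -
  have e: "e \<in> Beps eps" using meet unfolding is_eps_meet_def by blast
  note absorbs = eps_meet_absorbs[OF meet]
  have absorbs_right: "b * e = e" if "b \<in> Beps eps" for b
    using component_zero_commute_Beps[OF esg graded Beps_subset_component_zero[OF esg graded that] e]
      absorbs[OF that] by simp
  have "e * s = s * e" if s: "s \<in> S g" for s g
  proof -
    obtain b where "b \<in> Beps eps" "s * e = b * s"
      using component_mult_Beps[OF esg graded s e] by blast
    then have "e * s * e = e * s" by (metis absorbs mult.assoc)
    moreover obtain c where "c \<in> Beps eps" "e * s = s * c"
      using Beps_mult_component[OF esg graded s e] by blast
    then have "e * s * e = s * e" by (metis absorbs_right mult.assoc)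
    ultimately show ?thesis by simp
  qed
  then show ?thesis
    unfolding graded_central_idempotent_def
    using Beps_subset_component_zero[OF esg graded e] absorbs[OF e] by blast
qed

context
  fixes S :: "'g::group_add \<Rightarrow> 'a::ring_1 set" and e :: 'a and R :: "'a set"
  assumes graded: "graded_ring R S" and central: "graded_central_idempotent S e"
begin

lemma corner_mult: "a \<in> S g \<Longrightarrow> e * a * (e * b) = e * (a * b)"
  using central unfolding graded_central_idempotent_def by (metis mult.assoc)

lemma corner_component_subset: "(\<lambda>s. e * s) ` S g \<subseteq> S g"
  using central graded_ring_mult[OF graded, of e 0] unfolding graded_central_idempotent_def by auto

lemma corner_component_mult:
  "x \<in> (\<lambda>s. e * s) ` S g \<Longrightarrow> y \<in> (\<lambda>s. e * s) ` S h \<Longrightarrow> x * y \<in> (\<lambda>s. e * s) ` S (g + h)"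
  using corner_mult graded_ring_mult[OF graded] by auto

lemma corner_component_zero: "0 \<in> (\<lambda>s. e * s) ` S g"
  using image_eqI[of 0 "\<lambda>s. e * s" 0] graded_ring_component_zero[OF graded] by auto

lemma corner_component_add:
  "x \<in> (\<lambda>s. e * s) ` S g \<Longrightarrow> y \<in> (\<lambda>s. e * s) ` S g \<Longrightarrow> x + y \<in> (\<lambda>s. e * s) ` S g"
  using graded_ring_component_add[OF graded] by (auto simp flip: distrib_left)

lemma corner_component_uminus: "x \<in> (\<lambda>s. e * s) ` S g \<Longrightarrow> - x \<in> (\<lambda>s. e * s) ` S g"
  using graded_ring_component_uminus[OF graded] by (auto simp flip: mult_minus_right)

lemma corner_decomposition:
  assumes "r \<in> R"
  shows "\<exists>c. finite {g. c g \<noteq> 0} \<and> (\<forall>g. c g \<in> (\<lambda>s. e * s) ` S g)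
           \<and> e * r = (\<Sum>g\<in>{g. c g \<noteq> 0}. c g)"
proof -
  obtain c where c: "finite {g. c g \<noteq> 0}" "\<forall>g. c g \<in> S g" "r = (\<Sum>g\<in>{g. c g \<noteq> 0}. c g)"
    using graded assms unfolding graded_ring_def by meson
  have support: "{g. e * c g \<noteq> 0} \<subseteq> {g. c g \<noteq> 0}" by auto
  have "(\<Sum>g\<in>{g. e * c g \<noteq> 0}. e * c g) = (\<Sum>g\<in>{g. c g \<noteq> 0}. e * c g)"
    by (rule sum.mono_neutral_left[OF c(1) support]) simp
  also have "\<dots> = e * r" unfolding c(3) by (simp add: sum_distrib_left)
  finally show ?thesis
    using finite_subset[OF support c(1)] c(2) by (intro exI[of _ "\<lambda>g. e * c g"]) auto
qed

lemma graded_ring_corner: "graded_ring ((\<lambda>s. e * s) ` R) (\<lambda>g. (\<lambda>s. e * s) ` S g)"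
  unfolding graded_ring_def
proof (intro conjI allI ballI impI)
  fix g
  show "(\<lambda>s. e * s) ` S g \<subseteq> (\<lambda>s. e * s) ` R"
    using graded_ring_component_subset[OF graded] by (rule image_mono)
next
  fix c :: "'g \<Rightarrow> 'a" and g
  assume "finite {g. c g \<noteq> 0} \<and> (\<forall>g. c g \<in> (\<lambda>s. e * s) ` S g) \<and> (\<Sum>g\<in>{g. c g \<noteq> 0}. c g) = 0"
  moreover have "\<forall>g. c g \<in> (\<lambda>s. e * s) ` S g \<Longrightarrow> \<forall>g. c g \<in> S g"
    using corner_component_subset by blast
  ultimately show "c g = 0"
    using graded unfolding graded_ring_def by blast
next
  fix r assume "r \<in> (\<lambda>s. e * s) ` R"
  then show "\<exists>c. finite {g. c g \<noteq> 0} \<and> (\<forall>g. c g \<in> (\<lambda>s. e * s) ` S g) \<and> r = (\<Sum>g\<in>{g. c g \<noteq> 0}. c g)"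
    using corner_decomposition by blast
qed (use corner_component_zero corner_component_add corner_component_uminus corner_component_mult in auto)

lemma strongly_graded_corner:
  assumes esg: "epsilon_strongly_graded S eps" and below: "\<And>g. e * eps g = e"
  shows "strongly_graded (\<lambda>g. (\<lambda>s. e * s) ` S g)"
  unfolding strongly_graded_def
proof (intro allI equalityI)
  fix g h
  show "set_prod_sums ((\<lambda>s. e * s) ` S g) ((\<lambda>s. e * s) ` S h) \<subseteq> (\<lambda>s. e * s) ` S (g + h)"
    by (intro set_prod_sums_subset corner_component_zero corner_component_add corner_component_mult)
  show "(\<lambda>s. e * s) ` S (g + h) \<subseteq> set_prod_sums ((\<lambda>s. e * s) ` S g) ((\<lambda>s. e * s) ` S h)"
  proof
    fix z assume "z \<in> (\<lambda>s. e * s) ` S (g + h)"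
    then obtain s where s: "s \<in> S (g + h)" and z: "z = e * s" by blast
    obtain n :: nat and a b where eg: "eps g = (\<Sum>i<n. a i * b i)"
      and ab: "\<And>i. i < n \<Longrightarrow> a i \<in> S g \<and> b i \<in> S (- g)"
      using eps_in_set_prod_sums[OF esg, of g] unfolding set_prod_sums_iff by blast
    have bs: "b i * s \<in> S h" if "i < n" for i
      using graded_ring_mult[OF graded _ s, of "b i" "- g"] ab that by (simp add: add.assoc[symmetric])
    have "z = e * eps g * s" using z below by simp
    also have "\<dots> = (\<Sum>i<n. e * a i * (b i * s))"
      unfolding eg by (simp add: sum_distrib_left sum_distrib_right mult.assoc)
    also have "\<dots> = (\<Sum>i<n. (e * a i) * (e * (b i * s)))"
    proof (rule sum.cong)
      show "e * a i * (b i * s) = e * a i * (e * (b i * s))" if "i \<in> {..<n}" for i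
        using corner_mult[of "a i" g "b i * s"] ab that by (simp add: mult.assoc)
    qed simp
    finally show "z \<in> set_prod_sums ((\<lambda>s. e * s) ` S g) ((\<lambda>s. e * s) ` S h)"
      unfolding set_prod_sums_iff using ab bs
      by (intro exI[of _ n] exI[of _ "\<lambda>i. e * a i"] exI[of _ "\<lambda>i. e * (b i * s)"]) auto
  qed
qed

lemma crossed_product_corner:
  assumes ecp: "epsilon_crossed_product S eps" and below: "\<And>g. e * eps g = e"
  shows "crossed_product ((\<lambda>s. e * s) ` R) e (\<lambda>g. (\<lambda>s. e * s) ` S g)"
  unfolding crossed_product_def
proof
  fix g
  obtain s t where "s \<in> S g" "t \<in> S (- g)" "s * t = eps g" "t * s = eps (- g)"
    using ecp unfolding epsilon_crossed_product_def by blast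
  then have "e * s * (e * t) = e" "e * t * (e * s) = e"
    using corner_mult below by simp_all
  moreover have "e * t \<in> (\<lambda>s. e * s) ` R"
    using \<open>t \<in> S (- g)\<close> graded_ring_component_subset[OF graded] by blast
  ultimately show "\<exists>u\<in>(\<lambda>s. e * s) ` S g. \<exists>v\<in>(\<lambda>s. e * s) ` R. u * v = e \<and> v * u = e"
    using \<open>s \<in> S g\<close> by blast
qed

end

theorem mainTheorem14:
  fixes S :: "'g::group_add \<Rightarrow> 'a::ring_1 set"
    and eps :: "'g \<Rightarrow> 'a"
    and eG :: 'a
  assumes graded: "graded_ring UNIV S"
    and esg: "epsilon_strongly_graded S eps"
    and meet: "is_eps_meet eps eG"
    and nonzero: "eG \<noteq> 0"
  shows "graded_ring ((\<lambda>s. eG * s) ` UNIV) (\<lambda>g. (\<lambda>s. eG * s) ` S g)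
       \<and> strongly_graded (\<lambda>g. (\<lambda>s. eG * s) ` S g)
       \<and> (epsilon_crossed_product S eps \<longrightarrow>
            crossed_product ((\<lambda>s. eG * s) ` UNIV) eG (\<lambda>g. (\<lambda>s. eG * s) ` S g))"
proof -
  have central: "graded_central_idempotent S eG"
    using eps_meet_graded_central_idempotent[OF graded esg meet] .
  note below = eps_meet_below[OF meet]
  show ?thesis
    using graded_ring_corner[OF graded central] strongly_graded_corner[OF graded central esg below]
      crossed_product_corner[OF graded central, of eps, OF _ below] by blast
qed

end
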